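(* Let $n$ be even and $F\colon\mathbb F_2^n\to\mathbb F_2^n$ a quadratic APN function with linearity $2^{\frac{n+k}{2}}$, and assume $F$ has a component function with amplitude $2^{\frac{n+\ell}{2}}$ where $2\le\ell<n-k$ and $\ell\ne k$. Then $|N_F|\ge 2^k+2^\ell+1$.
   Context: $\langle\cdot,\cdot\rangle$ is the standard dot product. $F$ is APN if for every $a\ne0$ and $c$, $F(x)+F(x+a)=c$ has at most 2 solutions; quadratic if each component $F_b(x)=\langle b,F(x)\rangle$ is a quadratic form plus an affine function. $W_F(b,a)=\sum_x(-1)^{F_b(x)+\langle x,a\rangle}$; linearity $L(F)=\max_{a,\,b\ne0}|W_F(b,a)|$. For quadratic $F$ and fixed $b$ there is $k'$ with $|W_F(b,a)|\in\{0,2^{(n+k')/2}\}$ for all $a$; $2^{(n+k')/2}$ is the amplitude of $F_b$; $F_b$ is bent if its amplitude is $2^{n/2}$. $N_F=\{b\in\mathbb F_2^n\setminus\{0\}\colon F_b\text{ not bent}\}$. *)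

theory Defs
  imports Complex_Main "HOL-Library.Cardinality"
begin

text \<open>Vectors of F_2^n are modelled as functions 'n \<Rightarrow> bool over a finite index
type 'n with n = CARD('n); True = 1, addition is pointwise xor.\<close>

definition vzero :: "'n::finite \<Rightarrow> bool" where
  "vzero = (\<lambda>_. False)"

definition vadd :: "('n::finite \<Rightarrow> bool) \<Rightarrow> ('n \<Rightarrow> bool) \<Rightarrow> ('n \<Rightarrow> bool)" where
  "vadd x y = (\<lambda>i. x i \<noteq> y i)"

definition dotp :: "('n::finite \<Rightarrow> bool) \<Rightarrow> ('n \<Rightarrow> bool) \<Rightarrow> bool" where
  "dotp a x = odd (card {i. a i \<and> x i})"

definition comp :: "(('n::finite \<Rightarrow> bool) \<Rightarrow> ('n \<Rightarrow> bool)) \<Rightarrow> ('n \<Rightarrow> bool) \<Rightarrow> ('n \<Rightarrow> bool) \<Rightarrow> bool" where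
  "comp F b x = dotp b (F x)"

definition APN :: "(('n::finite \<Rightarrow> bool) \<Rightarrow> ('n \<Rightarrow> bool)) \<Rightarrow> bool" where
  "APN F \<longleftrightarrow> (\<forall>a c. a \<noteq> vzero \<longrightarrow> card {x. vadd (F x) (F (vadd x a)) = c} \<le> 2)"

definition quadratic :: "(('n::finite \<Rightarrow> bool) \<Rightarrow> ('n \<Rightarrow> bool)) \<Rightarrow> bool" where
  "quadratic F \<longleftrightarrow> (\<forall>b. \<exists>Q d e. \<forall>x.
      comp F b x = ((odd (card {(i,j). Q i j \<and> x i \<and> x j}) \<noteq> dotp d x) \<noteq> e))"

definition walsh :: "(('n::finite \<Rightarrow> bool) \<Rightarrow> ('n \<Rightarrow> bool)) \<Rightarrow> ('n \<Rightarrow> bool) \<Rightarrow> ('n \<Rightarrow> bool) \<Rightarrow> int" where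
  "walsh F b a = (\<Sum>x\<in>UNIV. (if comp F b x \<noteq> dotp x a then -1 else 1))"

definition linearity :: "(('n::finite \<Rightarrow> bool) \<Rightarrow> ('n \<Rightarrow> bool)) \<Rightarrow> int" where
  "linearity F = Max {\<bar>walsh F b a\<bar> | a b. b \<noteq> vzero}"

text \<open>Amplitude of F_b: the common nonzero value of |W_F(b,a)| (for quadratic F),
i.e. the maximum over a.\<close>
definition amplitude :: "(('n::finite \<Rightarrow> bool) \<Rightarrow> ('n \<Rightarrow> bool)) \<Rightarrow> ('n \<Rightarrow> bool) \<Rightarrow> int" where
  "amplitude F b = Max {\<bar>walsh F b a\<bar> | a. True}"

definition bent_comp :: "(('n::finite \<Rightarrow> bool) \<Rightarrow> ('n \<Rightarrow> bool)) \<Rightarrow> ('n \<Rightarrow> bool) \<Rightarrow> bool" where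
  "bent_comp F b \<longleftrightarrow> real_of_int (amplitude F b) = 2 powr (real (CARD('n)) / 2)"

definition NF :: "(('n::finite \<Rightarrow> bool) \<Rightarrow> ('n \<Rightarrow> bool)) \<Rightarrow> ('n \<Rightarrow> bool) set" where
  "NF F = {b. b \<noteq> vzero \<and> \<not> bent_comp F b}"

end

theory Submission
  imports Defs
begin

(* For quadratic F the polar form F_b(x + a) + F_b(x) + F_b(a) + F_b(0) of each component is
   bilinear, and every squared Walsh coefficient W_F(b, u)^2 is 0 or 2^n |V_b|, where V_b is the
   radical of that form. Hence F_b has amplitude 2^((n + dim V_b)/2) and is bent iff V_b = 0.
   For APN F, double counting shows that each nonzero a lies in V_b for exactly one b <> 0, so the
   radicals partition the nonzero vectors into subspaces.
   The linearity and the given component provide two parts W0, W1 of sizes 2^k and 2^l, and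
   U = W0 + W1 has 2^(k+l) < 2^n elements. A coset a + U <> U avoids W0 and W1, and a part meeting
   it in m points contains m - 1 nonzero points of U outside W0 and W1 (translate by one of the
   m points). So at least 2^(k+l) - (2^(k+l) - 2^k - 2^l + 1) = 2^k + 2^l - 1 further parts are
   nontrivial, and together with W0 and W1 they index non-bent components. *)

type_synonym 'n vec = "'n \<Rightarrow> bool"

lemma vadd_comm: "vadd x y = vadd y x"
  by (auto simp: vadd_def)

lemma vadd_assoc: "vadd (vadd x y) z = vadd x (vadd y z)"
  by (auto simp: vadd_def)

lemma vadd_left_commute: "vadd x (vadd y z) = vadd y (vadd x z)"
  by (auto simp: vadd_def)

lemmas vadd_ac = vadd_assoc vadd_comm vadd_left_commute

lemma vadd_zero [simp]: "vadd x vzero = x" "vadd vzero x = x"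
  by (auto simp: vadd_def vzero_def)

lemma vadd_cancel [simp]: "vadd (vadd x y) y = x" "vadd x (vadd x y) = y"
  by (auto simp: vadd_def)

lemma vadd_self [simp]: "vadd x x = vzero"
  by (auto simp: vadd_def vzero_def)

lemma vadd_eq_zero_iff: "vadd x y = vzero \<longleftrightarrow> x = y"
  by (auto simp: vadd_def vzero_def fun_eq_iff)

lemma vadd_left_cancel [simp]: "vadd x y = vadd x z \<longleftrightarrow> y = z"
  by (auto simp: vadd_def fun_eq_iff)

lemma bij_vadd: "bij (vadd a)"
  by (rule bijI') (auto intro: exI[of _ "vadd a y" for y])

lemma card_vectors: "card (UNIV :: 'n::finite vec set) = 2 ^ CARD('n)"
  by (simp add: card_fun)

lemma card_symdiff:
  assumes "finite A" "finite B"
  shows "card A + card B = card (sym_diff A B) + 2 * card (A \<inter> B)"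
proof -
  have "card ((A - B) \<union> (B - A)) = card (A - B) + card (B - A)"
    using assms by (intro card_Un_disjoint) auto
  moreover have "card A = card (A - B) + card (A \<inter> B)" "card B = card (B - A) + card (A \<inter> B)"
    using assms card_Int_Diff[of A B] card_Int_Diff[of B A] by (simp_all add: Int_commute)
  ultimately show ?thesis by simp
qed

lemma odd_card_xor:
  fixes P R :: "'a::finite \<Rightarrow> bool"
  shows "odd (card {p. P p \<noteq> R p}) \<longleftrightarrow> odd (card {p. P p}) \<noteq> odd (card {p. R p})"
proof -
  have "{p. P p \<noteq> R p} = sym_diff {p. P p} {p. R p}" by auto
  then have "card {p. P p} + card {p. R p} = card {p. P p \<noteq> R p} + 2 * card ({p. P p} \<inter> {p. R p})"
    by (metis card_symdiff finite)
  from arg_cong[OF this, of even] show ?thesis by simp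
qed

lemma dotp_comm: "dotp a x = dotp x a"
  unfolding dotp_def by (simp add: conj_commute)

lemma dotp_vadd_right: "dotp d (vadd u v) \<longleftrightarrow> dotp d u \<noteq> dotp d v"
proof -
  have "{i. d i \<and> vadd u v i} = {i. (d i \<and> u i) \<noteq> (d i \<and> v i)}" by (auto simp: vadd_def)
  then show ?thesis by (simp only: dotp_def odd_card_xor)
qed

lemma dotp_vadd_left: "dotp (vadd u v) d \<longleftrightarrow> dotp u d \<noteq> dotp v d"
  by (metis dotp_comm dotp_vadd_right)

lemma dotp_zero [simp]: "\<not> dotp d vzero" "\<not> dotp vzero d"
  unfolding dotp_def vzero_def by auto

lemma dotp_unit: "dotp (\<lambda>j. j = i) y = y i"
  unfolding dotp_def by (cases "y i") (auto simp: Collect_conv_if)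

section \<open>Character sums\<close>

definition chi :: "bool \<Rightarrow> int" where
  "chi p = (if p then -1 else 1)"

lemma chi_simps [simp]: "chi True = -1" "chi False = 1"
  by (simp_all add: chi_def)

lemma walsh_eq_sum_chi: "walsh F b u = (\<Sum>x\<in>UNIV. chi (comp F b x \<noteq> dotp x u))"
  unfolding walsh_def chi_def ..

lemma sum_vectors_translate:
  "(\<Sum>y\<in>UNIV. \<phi> y) = (\<Sum>x\<in>(UNIV :: 'n::finite vec set). \<phi> (vadd a x))"
  using sum.reindex_bij_betw[OF bij_vadd[of a], of \<phi>] by simp

lemma sum_chi_additive:
  fixes S :: "'n::finite vec set"
  assumes closed: "\<forall>x\<in>S. \<forall>y\<in>S. vadd x y \<in> S"
    and additive: "\<forall>x\<in>S. \<forall>y\<in>S. g (vadd x y) = (g x \<noteq> g y)"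
  shows "(\<Sum>x\<in>S. chi (g x)) = (if \<forall>x\<in>S. \<not> g x then int (card S) else 0)"
proof (cases "\<forall>x\<in>S. \<not> g x")
  case True
  then show ?thesis by (simp add: chi_def)
next
  case False
  then obtain x0 where x0: "x0 \<in> S" "g x0" by auto
  have "(\<Sum>x\<in>S. chi (g x)) = (\<Sum>x\<in>S. chi (g (vadd x0 x)))"
    by (rule sum.reindex_bij_witness[where i = "vadd x0" and j = "vadd x0"])
      (use closed x0 in auto)
  also have "\<dots> = - (\<Sum>x\<in>S. chi (g x))"
    using additive x0 by (simp add: sum_negf[symmetric]) (auto intro: sum.cong simp: chi_def)
  finally have "(\<Sum>x\<in>S. chi (g x)) = 0" by simp
  then show ?thesis by (simp only: if_not_P[OF False])
qed

lemma sum_chi_dotp: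
  "(\<Sum>d\<in>UNIV. chi (dotp d y)) = (if y = vzero then 2 ^ CARD('n) else 0)"
  for y :: "'n::finite vec"
proof -
  have "(\<forall>d. \<not> dotp d y) \<longleftrightarrow> y = vzero"
  proof
    assume "\<forall>d. \<not> dotp d y"
    then have "\<not> y i" for i
      using dotp_unit[of i y] by blast
    then show "y = vzero" by (auto simp: vzero_def)
  qed simp
  then show ?thesis
    using sum_chi_additive[of UNIV "\<lambda>d. dotp d y"] by (simp add: dotp_vadd_left card_vectors)
qed

lemma walsh_parseval: "(\<Sum>u\<in>UNIV. (walsh F b u)\<^sup>2) = 2 ^ (2 * CARD('n))"
  for F :: "'n::finite vec \<Rightarrow> 'n vec"
proof -
  define s where "s = comp F b"
  have chi_prod: "chi (s x \<noteq> dotp x u) * chi (s y \<noteq> dotp y u)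
      = chi (s x \<noteq> s y) * chi (dotp u (vadd x y))" for x y u
    by (auto simp: chi_def dotp_vadd_right dotp_comm)
  have "(\<Sum>u\<in>UNIV. (walsh F b u)\<^sup>2)
      = (\<Sum>u\<in>UNIV. \<Sum>x\<in>UNIV. \<Sum>y\<in>UNIV. chi (s x \<noteq> s y) * chi (dotp u (vadd x y)))"
    unfolding walsh_eq_sum_chi power2_eq_square sum_product s_def[symmetric] chi_prod ..
  also have "\<dots> = (\<Sum>x\<in>UNIV. \<Sum>y\<in>UNIV. \<Sum>u\<in>UNIV. chi (s x \<noteq> s y) * chi (dotp u (vadd x y)))"
    by (rule trans[OF sum.swap], rule sum.cong[OF refl], rule sum.swap)
  also have "\<dots> = 2 ^ CARD('n) * 2 ^ CARD('n)"
    by (simp add: sum_distrib_left[symmetric] sum_chi_dotp vadd_eq_zero_iff if_distrib card_vectors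
        cong: if_cong)
  finally show ?thesis by (simp add: mult_2 power_add)
qed

section \<open>The polar form of a quadratic Boolean function\<close>

definition f2_subspace :: "'n::finite vec set \<Rightarrow> bool" where
  "f2_subspace S \<longleftrightarrow> vzero \<in> S \<and> (\<forall>x\<in>S. \<forall>y\<in>S. vadd x y \<in> S)"

definition polar :: "('n::finite vec \<Rightarrow> bool) \<Rightarrow> 'n vec \<Rightarrow> 'n vec \<Rightarrow> bool" where
  "polar g a x = ((g (vadd x a) \<noteq> g x) \<noteq> (g a \<noteq> g vzero))"

definition polar_linear :: "('n::finite vec \<Rightarrow> bool) \<Rightarrow> bool" where
  "polar_linear g \<longleftrightarrow> (\<forall>a x y. polar g a (vadd x y) = (polar g a x \<noteq> polar g a y))"

definition radical :: "('n::finite vec \<Rightarrow> bool) \<Rightarrow> 'n vec set" where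
  "radical g = {a. \<forall>x. \<not> polar g a x}"

lemma polar_vadd:
  "polar g (vadd a b) x = ((polar g a (vadd x b) \<noteq> polar g b x) \<noteq> polar g a b)"
  unfolding polar_def by (auto simp: vadd_ac)

lemma f2_subspace_radical: "f2_subspace (radical g)"
  unfolding f2_subspace_def radical_def by (auto simp: polar_vadd) (simp add: polar_def)

lemma polar_quadratic_form:
  "polar (\<lambda>x. odd (card {(i, j). Q i j \<and> x i \<and> x j})) a x
    = odd (card {(i, j). Q i j \<and> ((x i \<and> a j) \<noteq> (a i \<and> x j))})"
proof -
  have "{(i, j). Q i j \<and> ((x i \<and> a j) \<noteq> (a i \<and> x j))}
      = {p. ((case p of (i, j) \<Rightarrow> Q i j \<and> vadd x a i \<and> vadd x a j)
              \<noteq> (case p of (i, j) \<Rightarrow> Q i j \<and> x i \<and> x j))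
            \<noteq> (case p of (i, j) \<Rightarrow> Q i j \<and> a i \<and> a j)}"
    by (auto simp: vadd_def)
  then show ?thesis
    by (simp only: polar_def odd_card_xor) (simp add: vzero_def)
qed

lemma polar_linear_quadratic_form:
  "polar_linear (\<lambda>x. odd (card {(i, j). Q i j \<and> x i \<and> x j}))"
proof -
  have "{(i, j). Q i j \<and> ((vadd x y i \<and> a j) \<noteq> (a i \<and> vadd x y j))}
      = {p. (case p of (i, j) \<Rightarrow> Q i j \<and> ((x i \<and> a j) \<noteq> (a i \<and> x j)))
            \<noteq> (case p of (i, j) \<Rightarrow> Q i j \<and> ((y i \<and> a j) \<noteq> (a i \<and> y j)))}"
    for a x y :: "'a vec"
    by (auto simp: vadd_def)
  then show ?thesis
    unfolding polar_linear_def polar_quadratic_form by (simp only: odd_card_xor) simp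
qed

lemma polar_xor_affine: "polar (\<lambda>x. (q x \<noteq> dotp d x) \<noteq> e) = polar q"
  by (auto simp: fun_eq_iff polar_def dotp_vadd_right)

lemma polar_linear_comp:
  assumes "quadratic F"
  shows "polar_linear (comp F b)"
proof -
  obtain Q d e
    where "\<forall>x. comp F b x = ((odd (card {(i, j). Q i j \<and> x i \<and> x j}) \<noteq> dotp d x) \<noteq> e)"
    using assms unfolding quadratic_def by blast
  then have "comp F b = (\<lambda>x. (odd (card {(i, j). Q i j \<and> x i \<and> x j}) \<noteq> dotp d x) \<noteq> e)"
    by (simp add: fun_eq_iff)
  then show ?thesis
    using polar_linear_quadratic_form unfolding polar_linear_def by (simp only: polar_xor_affine)
qed

lemma sum_chi_polar:
  fixes g :: "'n::finite vec \<Rightarrow> bool"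
  assumes "polar_linear g"
  shows "(\<Sum>x\<in>UNIV. chi (polar g a x)) = (if a \<in> radical g then 2 ^ CARD('n) else 0)"
  using sum_chi_additive[of UNIV "polar g a"] assms
  by (simp add: polar_linear_def radical_def card_vectors)

section \<open>Walsh spectrum of quadratic functions\<close>

lemma walsh_square:
  fixes F :: "'n::finite vec \<Rightarrow> 'n vec"
  assumes "polar_linear (comp F b)"
  shows "(walsh F b u)\<^sup>2 = 0 \<or> (walsh F b u)\<^sup>2 = 2 ^ CARD('n) * int (card (radical (comp F b)))"
proof -
  define g where "g = comp F b"
  define h where "h a = (dotp a u \<noteq> (g a \<noteq> g vzero))" for a
  have chi_prod: "chi (g x \<noteq> dotp x u) * chi (g (vadd x a) \<noteq> dotp (vadd x a) u)
      = chi (h a) * chi (polar g a x)" for x a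
    by (auto simp: chi_def h_def polar_def dotp_vadd_left)
  have h_additive: "h (vadd a a') = (h a \<noteq> h a')" if "a \<in> radical g" for a a'
  proof -
    have "\<not> polar g a a'" using that by (simp add: radical_def)
    then show ?thesis by (auto simp: h_def polar_def dotp_vadd_left vadd_comm)
  qed
  have "(walsh F b u)\<^sup>2
      = (\<Sum>x\<in>UNIV. \<Sum>a\<in>UNIV. chi (g x \<noteq> dotp x u) * chi (g (vadd x a) \<noteq> dotp (vadd x a) u))"
    unfolding walsh_eq_sum_chi power2_eq_square sum_product g_def
    by (rule sum.cong[OF refl], rule sum_vectors_translate)
  also have "\<dots> = (\<Sum>a\<in>UNIV. chi (h a) * (\<Sum>x\<in>UNIV. chi (polar g a x)))"
    unfolding chi_prod by (subst sum.swap) (simp add: sum_distrib_left)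
  also have "\<dots> = 2 ^ CARD('n) * (\<Sum>a\<in>radical g. chi (h a))"
    using assms by (simp add: g_def sum_chi_polar if_distrib sum_distrib_left mult.commute
        flip: sum.inter_filter cong: if_cong)
  also have "\<dots> = 2 ^ CARD('n) * (if \<forall>a\<in>radical g. \<not> h a then int (card (radical g)) else 0)"
    using f2_subspace_radical[of g] h_additive
    by (subst sum_chi_additive) (auto simp: f2_subspace_def)
  finally show ?thesis by (auto simp: g_def)
qed

lemma amplitude_eq_Max: "amplitude F b = Max (range (\<lambda>a. \<bar>walsh F b a\<bar>))"
  unfolding amplitude_def by (rule arg_cong[where f = Max]) auto

lemma amplitude_attained: "\<exists>u. amplitude F b = \<bar>walsh F b u\<bar>"
proof -
  have "amplitude F b \<in> range (\<lambda>u. \<bar>walsh F b u\<bar>)"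
    unfolding amplitude_eq_Max by (rule Max_in) auto
  then show ?thesis by auto
qed

lemma abs_walsh_le_amplitude: "\<bar>walsh F b u\<bar> \<le> amplitude F b"
  unfolding amplitude_eq_Max by (rule Max_ge) auto

lemma amplitude_square:
  fixes F :: "'n::finite vec \<Rightarrow> 'n vec"
  assumes "polar_linear (comp F b)"
  shows "(amplitude F b)\<^sup>2 = 2 ^ CARD('n) * int (card (radical (comp F b)))"
proof -
  obtain u0 where u0: "amplitude F b = \<bar>walsh F b u0\<bar>"
    using amplitude_attained by blast
  obtain u1 where "walsh F b u1 \<noteq> 0"
    using walsh_parseval[of F b] by force
  then have "walsh F b u0 \<noteq> 0"
    using abs_walsh_le_amplitude[of F b u1] u0 by auto
  then show ?thesis
    using walsh_square[OF assms, of u0] u0 by simp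
qed

lemma finite_abs_walsh_values: "finite {\<bar>walsh F b a\<bar> | a b. P b}"
  by (rule finite_subset[where B = "range (\<lambda>(a, b). \<bar>walsh F b a\<bar>)"]) auto

lemma abs_walsh_le_linearity:
  assumes "b \<noteq> vzero"
  shows "\<bar>walsh F b a\<bar> \<le> linearity F"
  unfolding linearity_def using assms by (intro Max_ge finite_abs_walsh_values) auto

lemma linearity_attained: "\<exists>b. b \<noteq> vzero \<and> linearity F = amplitude F b"
proof -
  have "(\<lambda>_. True) \<noteq> vzero" by (simp add: vzero_def fun_eq_iff)
  then have "linearity F \<in> {\<bar>walsh F b a\<bar> | a b. b \<noteq> vzero}"
    unfolding linearity_def by (intro Max_in finite_abs_walsh_values) auto
  then obtain a b where "b \<noteq> vzero" "linearity F = \<bar>walsh F b a\<bar>" by blast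
  moreover obtain u where "amplitude F b = \<bar>walsh F b u\<bar>"
    using amplitude_attained by blast
  ultimately show ?thesis
    using abs_walsh_le_amplitude[of F b a] abs_walsh_le_linearity[of b F u] by force
qed

lemma amplitude_le_linearity:
  assumes "b \<noteq> vzero"
  shows "amplitude F b \<le> linearity F"
  using amplitude_attained[of F b] abs_walsh_le_linearity[OF assms] by force

lemma square_eq_of_powr_half:
  fixes z :: int
  assumes "real_of_int z = 2 powr (real m / 2)"
  shows "z\<^sup>2 = 2 ^ m"
proof -
  have "real_of_int (z\<^sup>2) = 2 powr (real m / 2 + real m / 2)"
    using assms by (simp add: power2_eq_square flip: powr_add)
  also have "\<dots> = real_of_int (2 ^ m)" by (simp add: powr_realpow)
  finally show ?thesis by (simp only: of_int_eq_iff)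
qed

lemma card_radical_eq:
  fixes F :: "'n::finite vec \<Rightarrow> 'n vec"
  assumes "polar_linear (comp F b)"
    and "real_of_int (amplitude F b) = 2 powr ((real CARD('n) + real m) / 2)"
  shows "card (radical (comp F b)) = 2 ^ m"
proof -
  have "(amplitude F b)\<^sup>2 = 2 ^ (CARD('n) + m)"
    using assms(2) by (intro square_eq_of_powr_half) simp
  then show ?thesis
    using amplitude_square[OF assms(1)] by (simp add: power_add)
qed

lemma not_bent_if_radical_nontrivial:
  fixes F :: "'n::finite vec \<Rightarrow> 'n vec"
  assumes "polar_linear (comp F b)" and "radical (comp F b) \<noteq> {vzero}"
  shows "\<not> bent_comp F b"
proof
  assume "bent_comp F b"
  then have "(amplitude F b)\<^sup>2 = 2 ^ CARD('n)"
    unfolding bent_comp_def by (rule square_eq_of_powr_half)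
  then have "card (radical (comp F b)) = 1"
    using amplitude_square[OF assms(1)] by simp
  then show False
    using assms(2) f2_subspace_radical[of "comp F b"]
    by (auto simp: f2_subspace_def card_1_singleton_iff)
qed

section \<open>Radicals of quadratic APN functions\<close>

lemma sum_if_const:
  "(\<Sum>x\<in>(UNIV :: 'a::finite set). if P x then c else 0) = of_nat (card {x. P x}) * c"
  by (simp flip: sum.inter_filter)

lemma card_radical_members:
  fixes F :: "'n::finite vec \<Rightarrow> 'n vec"
  assumes quad: "\<And>d. polar_linear (comp F d)" and "APN F" and "a \<noteq> vzero"
  shows "card {d. a \<in> radical (comp F d)} = 2"
proof -
  define L where "L x = vadd (vadd (F (vadd x a)) (F x)) (vadd (F a) (F vzero))" for x
  have polar_comp: "polar (comp F d) a x = dotp d (L x)" for d x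
    unfolding polar_def comp_def L_def by (simp add: dotp_vadd_right)
  have "2 ^ CARD('n) * int (card {d. a \<in> radical (comp F d)})
      = (\<Sum>d\<in>UNIV. \<Sum>x\<in>UNIV. chi (polar (comp F d) a x))"
    by (simp add: sum_chi_polar[OF quad] sum_if_const)
  also have "\<dots> = (\<Sum>x\<in>UNIV. \<Sum>d\<in>UNIV. chi (dotp d (L x)))"
    unfolding polar_comp by (rule sum.swap)
  also have "\<dots> = 2 ^ CARD('n) * int (card {x. L x = vzero})"
    by (simp add: sum_chi_dotp sum_if_const)
  finally have card_eq: "card {d. a \<in> radical (comp F d)} = card {x. L x = vzero}"
    by simp
  have "{x. L x = vzero} = {x. vadd (F x) (F (vadd x a)) = vadd (F vzero) (F a)}"
    unfolding L_def by (auto simp: vadd_def vzero_def fun_eq_iff)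
  then have "card {x. L x = vzero} \<le> 2"
    using \<open>APN F\<close> \<open>a \<noteq> vzero\<close> unfolding APN_def by simp
  moreover have "card {vzero, a} \<le> card {x. L x = vzero}"
    by (rule card_mono) (auto simp: L_def vadd_ac)
  ultimately show ?thesis
    using card_eq \<open>a \<noteq> vzero\<close> by simp
qed

lemma ex1_radical_member:
  fixes F :: "'n::finite vec \<Rightarrow> 'n vec"
  assumes "\<And>d. polar_linear (comp F d)" and "APN F" and "a \<noteq> vzero"
  shows "\<exists>!d. d \<noteq> vzero \<and> a \<in> radical (comp F d)"
proof -
  obtain d d' where "{d. a \<in> radical (comp F d)} = {d, d'}" "d \<noteq> d'"
    using card_radical_members[OF assms] by (auto simp: card_2_iff)
  moreover have "a \<in> radical (comp F vzero)"
    by (simp add: radical_def polar_def comp_def)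
  ultimately show ?thesis
    by (metis (mono_tags, lifting) insert_iff mem_Collect_eq singletonD)
qed

section \<open>Partitions of F_2^n into subspaces\<close>

definition sumset :: "'n::finite vec set \<Rightarrow> 'n vec set \<Rightarrow> 'n vec set" where
  "sumset W0 W1 = (\<lambda>(p, q). vadd p q) ` (W0 \<times> W1)"

lemma f2_subspace_sumset:
  assumes "f2_subspace W0" "f2_subspace W1"
  shows "f2_subspace (sumset W0 W1)"
  unfolding f2_subspace_def
proof (intro conjI ballI)
  show "vzero \<in> sumset W0 W1"
    using assms unfolding sumset_def f2_subspace_def by (auto intro: image_eqI[of _ _ "(vzero, vzero)"])
next
  fix x y assume "x \<in> sumset W0 W1" "y \<in> sumset W0 W1"
  then obtain p q p' q'
    where "p \<in> W0" "q \<in> W1" "x = vadd p q" "p' \<in> W0" "q' \<in> W1" "y = vadd p' q'"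
    unfolding sumset_def by auto
  moreover have "vadd x y = vadd (vadd p p') (vadd q q')"
    using calculation by (simp add: vadd_ac)
  ultimately show "vadd x y \<in> sumset W0 W1"
    using assms unfolding sumset_def f2_subspace_def
    by (auto intro: image_eqI[of _ _ "(vadd p p', vadd q q')"])
qed

lemma subset_sumset:
  assumes "f2_subspace W0" "f2_subspace W1"
  shows "W0 \<subseteq> sumset W0 W1" "W1 \<subseteq> sumset W0 W1"
  using assms unfolding sumset_def f2_subspace_def
  by (auto intro: image_eqI[of _ _ "(x, vzero)" for x] image_eqI[of _ _ "(vzero, x)" for x])

lemma card_sumset:
  assumes "f2_subspace W0" "f2_subspace W1" "W0 \<inter> W1 = {vzero}"
  shows "card (sumset W0 W1) = card W0 * card W1"
proof -
  have "inj_on (\<lambda>(p, q). vadd p q) (W0 \<times> W1)"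
  proof (rule inj_onI, clarify)
    fix p q p' q' assume "p \<in> W0" "q \<in> W1" "p' \<in> W0" "q' \<in> W1" "vadd p q = vadd p' q'"
    then have "vadd p p' = vadd q q'" "vadd p p' \<in> W0" "vadd q q' \<in> W1"
      using assms(1,2) unfolding f2_subspace_def by (auto simp: vadd_def fun_eq_iff)
    then have "vadd p p' = vzero" "vadd q q' = vzero"
      using assms(3) by auto
    then show "p = p' \<and> q = q'"
      by (simp add: vadd_eq_zero_iff)
  qed
  then show ?thesis
    unfolding sumset_def by (simp add: card_image card_cartesian_product)
qed

lemma coset_disjoint:
  assumes "f2_subspace U" "a \<notin> U"
  shows "vadd a ` U \<inter> U = {}"
proof -
  have "vadd a u \<notin> U" if "u \<in> U" for u
  proof
    assume "vadd a u \<in> U"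
    then have "vadd (vadd a u) u \<in> U"
      using assms(1) that unfolding f2_subspace_def by blast
    then show False using assms(2) by simp
  qed
  then show ?thesis by auto
qed

lemma zero_notin_coset:
  assumes "a \<notin> U"
  shows "vzero \<notin> vadd a ` U"
  using assms by (metis imageE vadd_eq_zero_iff)

lemma partition_parts_inter:
  assumes partition: "\<And>x. x \<noteq> vzero \<Longrightarrow> \<exists>!c. c \<in> I \<and> x \<in> V c"
    and "c \<in> I" "c' \<in> I" "c \<noteq> c'"
  shows "V c \<inter> V c' \<subseteq> {vzero}"
proof
  fix x assume "x \<in> V c \<inter> V c'"
  then show "x \<in> {vzero}" using partition[of x] assms(2-4) by auto
qed

lemma card_subspace_coset_le:
  fixes V :: "'b \<Rightarrow> 'n::finite vec set"
  assumes subspace: "\<And>c. c \<in> I \<Longrightarrow> f2_subspace (V c)"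
    and partition: "\<And>x. x \<noteq> vzero \<Longrightarrow> \<exists>!c. c \<in> I \<and> x \<in> V c"
    and "finite I" "f2_subspace U" "a \<notin> U"
  defines "P \<equiv> {c \<in> I. V c \<inter> vadd a ` U \<noteq> {}}"
  shows "card U \<le> card P + card (\<Union>c\<in>P. V c \<inter> U - {vzero})"
proof -
  define A where "A = vadd a ` U"
  have "vzero \<notin> A"
    unfolding A_def using \<open>a \<notin> U\<close> by (rule zero_notin_coset)
  have "P \<subseteq> I" "finite P"
    using \<open>finite I\<close> unfolding P_def by auto
  note disjoint = partition_parts_inter[OF partition]
  have "A \<subseteq> (\<Union>c\<in>P. V c \<inter> A)"
  proof
    fix x assume "x \<in> A"
    then obtain c where "c \<in> I" "x \<in> V c"
      using partition \<open>vzero \<notin> A\<close> by metis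
    with \<open>x \<in> A\<close> show "x \<in> (\<Union>c\<in>P. V c \<inter> A)"
      unfolding P_def A_def by blast
  qed
  then have "card A \<le> card (\<Union>c\<in>P. V c \<inter> A)"
    by (intro card_mono) auto
  also have "\<dots> = (\<Sum>c\<in>P. card (V c \<inter> A))"
    using \<open>finite P\<close> \<open>P \<subseteq> I\<close> disjoint \<open>vzero \<notin> A\<close> by (subst card_UN_disjoint) auto
  also have "\<dots> \<le> (\<Sum>c\<in>P. 1 + card (V c \<inter> U - {vzero}))"
  proof (rule sum_mono)
    fix c assume "c \<in> P"
    then obtain y where y: "y \<in> V c" "y \<in> A"
      unfolding P_def A_def by blast
    have "V c \<inter> A \<subseteq> vadd y ` (V c \<inter> U)"
    proof
      fix x assume x: "x \<in> V c \<inter> A"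
      have "vadd y x \<in> V c"
        using subspace[of c] \<open>c \<in> P\<close> x y unfolding P_def f2_subspace_def by blast
      moreover have "vadd y x \<in> U"
        using x y assms(4) unfolding A_def f2_subspace_def by (auto simp: vadd_ac)
      ultimately show "x \<in> vadd y ` (V c \<inter> U)"
        by (auto intro: image_eqI[of _ _ "vadd y x"])
    qed
    then have "card (V c \<inter> A) \<le> card (V c \<inter> U)"
      by (metis card_image_le card_mono finite le_trans)
    also have "\<dots> = 1 + card (V c \<inter> U - {vzero})"
      using subspace[of c] \<open>c \<in> P\<close> assms(4) card.remove[of "V c \<inter> U" vzero]
      unfolding P_def f2_subspace_def by simp
    finally show "card (V c \<inter> A) \<le> 1 + card (V c \<inter> U - {vzero})" .
  qed
  also have "\<dots> = card P + card (\<Union>c\<in>P. V c \<inter> U - {vzero})"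
    using \<open>finite P\<close> \<open>P \<subseteq> I\<close> disjoint by (subst card_UN_disjoint) (auto simp: sum_Suc)
  finally show ?thesis
    using card_image[of "vadd a" U] unfolding A_def by (simp add: inj_on_def)
qed

lemma card_parts_meeting_coset_ge:
  fixes V :: "'b \<Rightarrow> 'n::finite vec set"
  assumes subspace: "\<And>c. c \<in> I \<Longrightarrow> f2_subspace (V c)"
    and partition: "\<And>x. x \<noteq> vzero \<Longrightarrow> \<exists>!c. c \<in> I \<and> x \<in> V c"
    and "finite I" "f2_subspace U" "a \<notin> U"
    and "b0 \<in> I" "b1 \<in> I" "b0 \<noteq> b1" "V b0 \<subseteq> U" "V b1 \<subseteq> U"
  defines "P \<equiv> {c \<in> I. V c \<inter> vadd a ` U \<noteq> {}}"
  shows "card (V b0) + card (V b1) \<le> card P + 1"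
proof -
  have "b0 \<notin> P" "b1 \<notin> P"
    using coset_disjoint[OF assms(4,5)] assms(9,10) unfolding P_def by auto
  have "(\<Union>c\<in>P. V c \<inter> U - {vzero}) \<subseteq> U - (V b0 \<union> V b1)"
  proof
    fix x assume "x \<in> (\<Union>c\<in>P. V c \<inter> U - {vzero})"
    then obtain c where "c \<in> P" "c \<in> I" "x \<in> V c" "x \<in> U" "x \<noteq> vzero"
      unfolding P_def by auto
    then have "x \<notin> V b0 \<and> x \<notin> V b1"
      using partition[of x] \<open>b0 \<notin> P\<close> \<open>b1 \<notin> P\<close> assms(6,7) by metis
    with \<open>x \<in> U\<close> show "x \<in> U - (V b0 \<union> V b1)" by simp
  qed
  then have "card (\<Union>c\<in>P. V c \<inter> U - {vzero}) \<le> card U - card (V b0 \<union> V b1)"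
    using assms(9,10) by (metis card_Diff_subset card_mono finite le_sup_iff)
  moreover have "card U \<le> card P + card (\<Union>c\<in>P. V c \<inter> U - {vzero})"
    unfolding P_def using subspace partition assms(3-5) by (rule card_subspace_coset_le)
  moreover have "card (V b0 \<union> V b1) \<le> card U"
    using assms(9,10) by (intro card_mono) auto
  moreover have "V b0 \<inter> V b1 = {vzero}"
    using partition_parts_inter[OF partition assms(6-8)] subspace assms(6,7)
    unfolding f2_subspace_def by blast
  then have "card (V b0 \<union> V b1) + 1 = card (V b0) + card (V b1)"
    using card_Un_Int[of "V b0" "V b1"] by simp
  ultimately show ?thesis by linarith
qed

lemma card_nontrivial_parts_ge:
  fixes V :: "'b \<Rightarrow> 'n::finite vec set"
  assumes subspace: "\<And>c. c \<in> I \<Longrightarrow> f2_subspace (V c)"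
    and partition: "\<And>x. x \<noteq> vzero \<Longrightarrow> \<exists>!c. c \<in> I \<and> x \<in> V c"
    and "finite I" and "b0 \<in> I" "b1 \<in> I" "b0 \<noteq> b1"
    and "V b0 \<noteq> {vzero}" "V b1 \<noteq> {vzero}"
    and small: "card (V b0) * card (V b1) < 2 ^ CARD('n)"
  shows "card (V b0) + card (V b1) + 1 \<le> card {c \<in> I. V c \<noteq> {vzero}}"
proof -
  define U where "U = sumset (V b0) (V b1)"
  have W: "f2_subspace (V b0)" "f2_subspace (V b1)"
    using subspace assms(4,5) by auto
  have U: "f2_subspace U" "V b0 \<subseteq> U" "V b1 \<subseteq> U"
    unfolding U_def using f2_subspace_sumset[OF W] subset_sumset[OF W] by auto
  have "V b0 \<inter> V b1 = {vzero}"
    using partition_parts_inter[OF partition assms(4-6)] W unfolding f2_subspace_def by blast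
  then have "card U < card (UNIV :: 'n vec set)"
    using small unfolding U_def card_vectors by (simp add: card_sumset[OF W])
  then obtain a where "a \<notin> U"
    by (metis UNIV_I card_mono finite not_le subsetI)
  define P where "P = {c \<in> I. V c \<inter> vadd a ` U \<noteq> {}}"
  have "card (V b0) + card (V b1) \<le> card P + 1"
    unfolding P_def using subspace partition assms(3) U(1) \<open>a \<notin> U\<close> assms(4-6) U(2,3)
    by (rule card_parts_meeting_coset_ge)
  moreover have "b0 \<notin> P" "b1 \<notin> P"
    using coset_disjoint[OF U(1) \<open>a \<notin> U\<close>] U(2,3) unfolding P_def by auto
  then have "card (insert b0 (insert b1 P)) = card P + 2"
    using \<open>b0 \<noteq> b1\<close> \<open>finite I\<close> unfolding P_def by simp
  moreover have "V c \<noteq> {vzero}" if "c \<in> P" for c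
    using that zero_notin_coset[OF \<open>a \<notin> U\<close>] unfolding P_def by force
  then have "insert b0 (insert b1 P) \<subseteq> {c \<in> I. V c \<noteq> {vzero}}"
    using assms(4,5,7,8) unfolding P_def by blast
  then have "card (insert b0 (insert b1 P)) \<le> card {c \<in> I. V c \<noteq> {vzero}}"
    using \<open>finite I\<close> by (intro card_mono) auto
  ultimately show ?thesis by linarith
qed

lemma card_radical_mono:
  fixes F :: "'n::finite vec \<Rightarrow> 'n vec"
  assumes "polar_linear (comp F b)" "polar_linear (comp F b')"
    and "amplitude F b \<le> amplitude F b'"
  shows "card (radical (comp F b)) \<le> card (radical (comp F b'))"
proof -
  have "0 \<le> amplitude F b"
    using abs_walsh_le_amplitude[of F b] abs_ge_zero order_trans by blast
  then have "(amplitude F b)\<^sup>2 \<le> (amplitude F b')\<^sup>2"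
    using assms(3) by (simp add: power_mono)
  then show ?thesis
    unfolding amplitude_square[OF assms(1)] amplitude_square[OF assms(2)] by simp
qed

theorem mainTheorem9:
  fixes F :: "'n::finite vec \<Rightarrow> 'n vec" and k l :: nat
  assumes "even CARD('n)"
    and "quadratic F" and "APN F"
    and "real_of_int (linearity F) = 2 powr ((real (CARD('n)) + real k) / 2)"
    and "\<exists>b. b \<noteq> vzero \<and> real_of_int (amplitude F b) = 2 powr ((real (CARD('n)) + real l) / 2)"
    and "2 \<le> l" and "l + k < CARD('n)" and "l \<noteq> k"
  shows "card (NF F) \<ge> 2 ^ k + 2 ^ l + 1"
proof -
  define V where "V d = radical (comp F d)" for d
  have quad: "\<And>d. polar_linear (comp F d)"
    using assms(2) by (rule polar_linear_comp)
  obtain b0 where b0: "b0 \<noteq> vzero" "linearity F = amplitude F b0"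
    using linearity_attained by blast
  obtain b1 where b1: "b1 \<noteq> vzero"
    "real_of_int (amplitude F b1) = 2 powr ((real CARD('n) + real l) / 2)"
    using assms(5) by blast
  have card_V: "card (V b0) = 2 ^ k" "card (V b1) = 2 ^ l"
    unfolding V_def using card_radical_eq[OF quad] b0(2) assms(4) b1(2) by auto
  have "card (V b1) \<le> card (V b0)"
    unfolding V_def using amplitude_le_linearity[OF b1(1), of F] b0(2)
    by (intro card_radical_mono quad) simp
  moreover have "4 \<le> card (V b1)"
    using power_increasing[OF assms(6), of "2::nat"] card_V by simp
  moreover have "card (V b0) \<noteq> card (V b1)"
    using card_V assms(8) by simp
  ultimately have "b0 \<noteq> b1" "V b0 \<noteq> {vzero}" "V b1 \<noteq> {vzero}"
    by auto
  moreover have "card (V b0) * card (V b1) < 2 ^ CARD('n)"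
    using card_V assms(7) by (simp flip: power_add)
  moreover have "\<And>x. x \<noteq> vzero \<Longrightarrow> \<exists>!c. c \<in> {d. d \<noteq> vzero} \<and> x \<in> V c"
    unfolding V_def using ex1_radical_member[OF quad assms(3)] by simp
  ultimately have "card (V b0) + card (V b1) + 1 \<le> card {c \<in> {d. d \<noteq> vzero}. V c \<noteq> {vzero}}"
    using b0(1) b1(1) f2_subspace_radical unfolding V_def by (intro card_nontrivial_parts_ge) auto
  also have "\<dots> \<le> card (NF F)"
    unfolding V_def NF_def using not_bent_if_radical_nontrivial[OF quad] by (intro card_mono) auto
  finally show ?thesis
    using card_V by simp
qed

end
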